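(* Let $G$ be an odd unicyclic graph on $n$ vertices $1,\ldots,n$ and edges $e_1,\ldots,e_n$ with cycle $C$. For distinct edges $e_i,e_j$ and a vertex $k$: (a) if $e_i,e_j\in C$ and $k\in G\setminus\{e_i,e_j\}[P_{e_i-e_j}]$, then $d(e_i,k)+d(e_j,k)$ and $d(e_i,e_j)$ have the same parity; (b) if $e_i,e_j\in C$ and $k\notin G\setminus\{e_i,e_j\}[P_{e_i-e_j}]$, then $d(e_i,k)+d(e_j,k)$ and $d(e_i,e_j)$ have different parity; (c) if $e_i,e_j\notin C$ and $k\in (G\setminus e_i(C))\cap(G\setminus e_j(C))$, then $d(e_i,k)+d(e_j,k)$ and $d(e_i,e_j)$ have different parity; (d) if $e_i\in C$, $e_j\notin C$ and $k\notin G\setminus e_j[C]$, then $d(e_i,k)+d(e_j,k)$ and $d(e_i,e_j)$ have different parity.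
   Context: A unicyclic graph on $n$ vertices is a simple connected graph with $n$ edges; it is odd if its unique cycle $C$ has odd length. $d$ is graph distance; for vertex $k$ and edge $e=\{l,m\}$, $d(e,k):=\min\{d(k,l),d(k,m)\}$, and for edges $d(e_i,e_j):=\min\{d(l_i,e_j),d(m_i,e_j)\}$ where $e_i=\{l_i,m_i\}$. For an edge $e$ not on $C$, $G\setminus e[C]$ is the component of $G\setminus e$ containing $C$ and $G\setminus e(C)$ the other component. For distinct edges $e_i,e_j$ on $C$, $P_{e_i-e_j}$ is the shortest path between endpoints of $e_i$ and of $e_j$, and $G\setminus\{e_i,e_j\}[P_{e_i-e_j}]$ is the component of $G\setminus\{e_i,e_j\}$ containing $P_{e_i-e_j}$. *)

theory Defs
  imports Main
begin

definition simple_graph :: "'a set \<Rightarrow> 'a set set \<Rightarrow> bool" where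
  "simple_graph V E \<longleftrightarrow> finite V \<and> (\<forall>e\<in>E. e \<subseteq> V \<and> card e = 2)"

text \<open>A walk (vertex list) in the graph (V, E); its length is the number of steps.\<close>
definition walk :: "'a set \<Rightarrow> 'a set set \<Rightarrow> 'a list \<Rightarrow> bool" where
  "walk V E p \<longleftrightarrow> p \<noteq> [] \<and> set p \<subseteq> V \<and>
     (\<forall>i. Suc i < length p \<longrightarrow> {p ! i, p ! Suc i} \<in> E)"

definition reach :: "'a set \<Rightarrow> 'a set set \<Rightarrow> 'a \<Rightarrow> 'a \<Rightarrow> bool" where
  "reach V E u v \<longleftrightarrow> (\<exists>p. walk V E p \<and> hd p = u \<and> last p = v)"

definition connected_graph :: "'a set \<Rightarrow> 'a set set \<Rightarrow> bool" where
  "connected_graph V E \<longleftrightarrow> simple_graph V E \<and> (\<forall>u\<in>V. \<forall>v\<in>V. reach V E u v)"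

definition unicyclic :: "'a set \<Rightarrow> 'a set set \<Rightarrow> bool" where
  "unicyclic V E \<longleftrightarrow> connected_graph V E \<and> card E = card V"

definition cycle_edges :: "'a list \<Rightarrow> 'a set set" where
  "cycle_edges c = {{c ! i, c ! ((Suc i) mod length c)} | i. i < length c}"

definition is_cycle :: "'a set \<Rightarrow> 'a set set \<Rightarrow> 'a set set \<Rightarrow> bool" where
  "is_cycle V E C \<longleftrightarrow> (\<exists>c. distinct c \<and> length c \<ge> 3 \<and> set c \<subseteq> V \<and>
      cycle_edges c \<subseteq> E \<and> C = cycle_edges c)"

definition gdist :: "'a set \<Rightarrow> 'a set set \<Rightarrow> 'a \<Rightarrow> 'a \<Rightarrow> nat" where
  "gdist V E u v = (LEAST n. \<exists>p. walk V E p \<and> hd p = u \<and> last p = v \<and> length p = Suc n)"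

definition edist_v :: "'a set \<Rightarrow> 'a set set \<Rightarrow> 'a set \<Rightarrow> 'a \<Rightarrow> nat" where
  "edist_v V E e k = Min ((\<lambda>x. gdist V E k x) ` e)"

definition edist_e :: "'a set \<Rightarrow> 'a set set \<Rightarrow> 'a set \<Rightarrow> 'a set \<Rightarrow> nat" where
  "edist_e V E ei ej = Min ((\<lambda>x. edist_v V E ej x) ` ei)"

text \<open>G \<setminus> e[C]: vertex set of the component of G - e containing the cycle C.\<close>
definition comp_with_cycle :: "'a set \<Rightarrow> 'a set set \<Rightarrow> 'a set set \<Rightarrow> 'a set \<Rightarrow> 'a set" where
  "comp_with_cycle V E C e = {k \<in> V. \<exists>c \<in> \<Union>C. reach V (E - {e}) c k}"

text \<open>G \<setminus> e(C): the other component of G - e.\<close>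
definition comp_without_cycle :: "'a set \<Rightarrow> 'a set set \<Rightarrow> 'a set set \<Rightarrow> 'a set \<Rightarrow> 'a set" where
  "comp_without_cycle V E C e = V - comp_with_cycle V E C e"

definition shortest_path_between :: "'a set \<Rightarrow> 'a set set \<Rightarrow> 'a set \<Rightarrow> 'a set \<Rightarrow> 'a list \<Rightarrow> bool" where
  "shortest_path_between V E ei ej p \<longleftrightarrow> walk V E p \<and> hd p \<in> ei \<and> last p \<in> ej \<and>
     length p = Suc (edist_e V E ei ej)"

text \<open>G \<setminus> {e_i,e_j}[P_{e_i-e_j}]: vertices of the component of G - {e_i,e_j} containing
  the shortest path P_{e_i-e_j}.\<close>
definition comp_with_path :: "'a set \<Rightarrow> 'a set set \<Rightarrow> 'a set \<Rightarrow> 'a set \<Rightarrow> 'a set" where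
  "comp_with_path V E ei ej = {k \<in> V. \<exists>p. shortest_path_between V E ei ej p \<and>
      (\<exists>x \<in> set p. reach V (E - {ei, ej}) x k)}"

end

theory Submission
  imports Defs
begin

(*
  Deleting an edge e of the odd cycle C leaves a spanning tree T (connected, with |V| - 1 edges),
  which is bipartite by the parity of the distance to a root. The two endpoints of e get the same
  colour, since the rest of C joins them by a path of even length; and a shortest path from k to
  e never uses e, so d(e,k) has the parity of the colour of k relative to e. Hence d(e,a) + d(e,b)
  is odd for every edge ab other than e.

  For e_i, e_j on C the parity of d(e_i,k) + d(e_j,k) is therefore constant along the components of
  G - {e_i, e_j}. On a shortest path P between e_i and e_j it equals d(e_i,e_j), and it differs at
  the two endpoints of e_i; since every vertex is joined in G - {e_i, e_j} to an endpoint of e_i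
  (first towards C, then along one of the two arcs of C), this gives (a) and (b).

  Parts (c) and (d) only need that e_j = uw is a bridge with k on the far side w: then
  d(k,v) = d(k,w) + 1 + d(u,v) for every v on the cycle side, which shifts the parity by one.
*)

section \<open>Walks and reachability\<close>

lemma exists_leaving_index:
  assumes "p \<noteq> []" and "hd p \<in> S" and "last p \<notin> S"
  shows "\<exists>i. Suc i < length p \<and> p ! i \<in> S \<and> p ! Suc i \<notin> S"
  using assms
proof (induction p rule: induct_list012)
  case (3 a b p)
  show ?case
  proof (cases "b \<in> S")
    case True
    have "last (b # p) \<notin> S"
      using "3.prems"(3) by simp
    with True obtain i where "Suc i < length (b # p)" "(b # p) ! i \<in> S" "(b # p) ! Suc i \<notin> S"
      using "3.IH"(2) by simp blast
    then show ?thesis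
      by (intro exI[of _ "Suc i"]) simp
  next
    case False
    with "3.prems"(2) show ?thesis
      by (intro exI[of _ 0]) simp
  qed
qed simp_all

lemma walk_singleton [simp]: "walk V E [a] \<longleftrightarrow> a \<in> V"
  by (simp add: walk_def)

lemma walk_Cons_Cons [simp]:
  "walk V E (a # b # p) \<longleftrightarrow> a \<in> V \<and> {a, b} \<in> E \<and> walk V E (b # p)"
  by (auto simp: walk_def less_Suc_eq_0_disj)

lemma walk_Nil [simp]: "\<not> walk V E []"
  by (simp add: walk_def)

lemma walk_Diff_iff:
  "walk V (E - X) p \<longleftrightarrow> walk V E p \<and> (\<forall>i. Suc i < length p \<longrightarrow> {p ! i, p ! Suc i} \<notin> X)"
  by (auto simp: walk_def)

lemma walk_mono: "walk V E p \<Longrightarrow> E \<subseteq> E' \<Longrightarrow> walk V E' p"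
  by (auto simp: walk_def)

lemma walk_take: "walk V E p \<Longrightarrow> 0 < n \<Longrightarrow> walk V E (take n p)"
  by (auto simp: walk_def dest: in_set_takeD)

lemma walk_drop: "walk V E p \<Longrightarrow> i < length p \<Longrightarrow> walk V E (drop i p)"
  by (auto simp: walk_def dest: in_set_dropD)

lemma walk_rev: "walk V E p \<Longrightarrow> walk V E (rev p)"
  unfolding walk_def
proof (intro conjI allI impI; (elim conjE)?)
  fix i assume p: "\<forall>i. Suc i < length p \<longrightarrow> {p ! i, p ! Suc i} \<in> E" and i: "Suc i < length (rev p)"
  have "{p ! (length p - Suc (Suc i)), p ! Suc (length p - Suc (Suc i))} \<in> E"
    using p i by simp
  moreover have "Suc (length p - Suc (Suc i)) = length p - Suc i"
    using i by simp
  ultimately show "{rev p ! i, rev p ! Suc i} \<in> E"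
    using i by (simp add: rev_nth insert_commute)
qed auto

lemma walk_append:
  "walk V E p \<Longrightarrow> walk V E q \<Longrightarrow> last p = hd q \<Longrightarrow> walk V E (p @ tl q)"
proof (induction p rule: induct_list012)
  case (2 a)
  then show ?case by (cases q) auto
qed auto

lemma walk_propagate:
  assumes "walk V E p" and "P (hd p)" and "\<And>a b. {a, b} \<in> E \<Longrightarrow> P a \<Longrightarrow> P b"
  shows "P (last p)"
  using assms(1,2)
proof (induction p rule: induct_list012)
  case (3 a b p)
  then have "P b" using assms(3) by auto
  with 3 show ?case by simp
qed auto

lemma walk_length_parity:
  fixes f :: "'a \<Rightarrow> nat"
  assumes "walk V E p" and "\<And>a b. {a, b} \<in> E \<Longrightarrow> odd (f a + f b)"
  shows "odd (length p + f (hd p) + f (last p))"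
  using assms(1)
proof (induction p rule: induct_list012)
  case (3 a b p)
  then have "odd (length (b # p) + f b + f (last (b # p)))" "odd (f a + f b)"
    using assms(2) by auto
  then show ?case by simp presburger
qed auto

lemma reach_refl: "v \<in> V \<Longrightarrow> reach V E v v"
  unfolding reach_def by (intro exI[of _ "[v]"]) simp

lemma reach_edge: "{a, b} \<in> E \<Longrightarrow> a \<in> V \<Longrightarrow> b \<in> V \<Longrightarrow> reach V E a b"
  unfolding reach_def by (intro exI[of _ "[a, b]"]) simp

lemma reach_sym: "reach V E u v \<Longrightarrow> reach V E v u"
  unfolding reach_def by (metis walk_rev hd_rev last_rev)

lemma reach_trans: "reach V E u v \<Longrightarrow> reach V E v w \<Longrightarrow> reach V E u w"
  unfolding reach_def
  by (metis walk_append walk_Nil append_Nil2 hd_append2 last_appendR last_tl list.collapse last_ConsL)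

lemma reach_mono: "reach V E u v \<Longrightarrow> E \<subseteq> E' \<Longrightarrow> reach V E' u v"
  unfolding reach_def using walk_mono by blast

lemma reach_walk_hd_last: "walk V E p \<Longrightarrow> reach V E (hd p) (last p)"
  unfolding reach_def by blast

lemma reach_along_walk:
  assumes "walk V E p" and "x \<in> set p"
  shows "reach V E (hd p) x" and "reach V E x (last p)"
proof -
  obtain i where i: "i < length p" "x = p ! i"
    using assms(2) by (auto simp: in_set_conv_nth)
  have "hd (take (Suc i) p) = hd p"
    by (simp add: hd_take)
  moreover have "last (take (Suc i) p) = x"
    using i by (simp add: take_Suc_conv_app_nth)
  ultimately show "reach V E (hd p) x"
    using reach_walk_hd_last[OF walk_take[OF assms(1)], of "Suc i"] by simp
  have "hd (drop i p) = x" "last (drop i p) = last p"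
    using i by (simp_all add: hd_drop_conv_nth)
  then show "reach V E x (last p)"
    using reach_walk_hd_last[OF walk_drop[OF assms(1) i(1)]] by simp
qed

lemma reach_propagate:
  "reach V E u v \<Longrightarrow> P u \<Longrightarrow> (\<And>a b. {a, b} \<in> E \<Longrightarrow> P a \<Longrightarrow> P b) \<Longrightarrow> P v"
  unfolding reach_def using walk_propagate by metis

lemma reach_first_hit:
  assumes "walk V E p" and "last p \<in> S"
  shows "\<exists>s\<in>S. reach V (E - Pow S) (hd p) s"
  using assms
proof (induction p rule: induct_list012)
  case (2 a)
  then show ?case by (auto intro: reach_refl)
next
  case (3 a b p)
  then obtain s where s: "s \<in> S" "reach V (E - Pow S) b s" by auto
  show ?case
  proof (cases "a \<in> S")
    case True
    with 3 show ?thesis by (auto intro: reach_refl)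
  next
    case False
    with 3 have "reach V (E - Pow S) a b"
      by (intro reach_edge) (auto simp: walk_def)
    with s show ?thesis by (auto intro: reach_trans)
  qed
qed simp

lemma gdist_less_length: "walk V E p \<Longrightarrow> gdist V E (hd p) (last p) < length p"
proof -
  assume p: "walk V E p"
  then have "length p = Suc (length p - 1)" by (cases p) auto
  with p have "gdist V E (hd p) (last p) \<le> length p - 1"
    unfolding gdist_def by (intro Least_le) blast
  with p show ?thesis by (cases p) auto
qed

lemma shortest_walk_exists:
  assumes "reach V E u v"
  obtains p where "walk V E p" "hd p = u" "last p = v" "length p = Suc (gdist V E u v)"
proof -
  obtain p where p: "walk V E p" "hd p = u" "last p = v"
    using assms unfolding reach_def by blast
  then have "length p = Suc (length p - 1)" by (cases p) auto
  with p have "\<exists>n p. walk V E p \<and> hd p = u \<and> last p = v \<and> length p = Suc n" by blast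
  from LeastI_ex[OF this] show ?thesis
    using that unfolding gdist_def by blast
qed

lemma gdist_hd_nth: "walk V E p \<Longrightarrow> i < length p \<Longrightarrow> gdist V E (hd p) (p ! i) \<le> i"
proof -
  assume p: "walk V E p" and i: "i < length p"
  have "hd (take (Suc i) p) = hd p"
    by (simp add: hd_take)
  moreover have "last (take (Suc i) p) = p ! i"
    using i by (simp add: take_Suc_conv_app_nth)
  moreover note gdist_less_length[OF walk_take[OF p, of "Suc i"]]
  ultimately show ?thesis
    by simp
qed

lemma gdist_nth_last: "walk V E p \<Longrightarrow> i < length p \<Longrightarrow> gdist V E (p ! i) (last p) < length p - i"
  using gdist_less_length[of V E "drop i p"] by (simp add: walk_drop hd_drop_conv_nth)

section \<open>Cycles as vertex lists\<close>

definition cycle_list :: "'a set \<Rightarrow> 'a set set \<Rightarrow> 'a list \<Rightarrow> bool" where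
  "cycle_list V E c \<longleftrightarrow> distinct c \<and> 3 \<le> length c \<and> set c \<subseteq> V \<and> cycle_edges c \<subseteq> E"

lemma is_cycle_iff: "is_cycle V E C \<longleftrightarrow> (\<exists>c. cycle_list V E c \<and> C = cycle_edges c)"
  by (auto simp: is_cycle_def cycle_list_def)

lemma cycle_edges_nth_inj:
  assumes "distinct c" "3 \<le> length c" "i < length c" "j < length c"
    and "{c ! i, c ! (Suc i mod length c)} = {c ! j, c ! (Suc j mod length c)}"
  shows "i = j"
proof (rule ccontr)
  assume "i \<noteq> j"
  have "0 < length c"
    using assms(3) by linarith
  then have "Suc i mod length c < length c" "Suc j mod length c < length c"
    by simp_all
  moreover from \<open>i \<noteq> j\<close> assms have "c ! i = c ! (Suc j mod length c)" "c ! (Suc i mod length c) = c ! j"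
    by (auto simp: doubleton_eq_iff nth_eq_iff_index_eq)
  ultimately have "i = Suc j mod length c" "j = Suc i mod length c"
    using assms(1,3,4) nth_eq_iff_index_eq by metis+
  moreover have "Suc x mod length c = (if Suc x < length c then Suc x else 0)" if "x < length c" for x
    using that by (simp add: mod_Suc)
  ultimately have "i = (if Suc j < length c then Suc j else 0)" "j = (if Suc i < length c then Suc i else 0)"
    using assms(3,4) by metis+
  with assms(2) show False
    by presburger
qed

lemma card_cycle_edges: "distinct c \<Longrightarrow> 3 \<le> length c \<Longrightarrow> card (cycle_edges c) = length c"
proof -
  assume c: "distinct c" "3 \<le> length c"
  have "cycle_edges c = (\<lambda>i. {c ! i, c ! (Suc i mod length c)}) ` {..<length c}"
    by (auto simp: cycle_edges_def)
  moreover have "inj_on (\<lambda>i. {c ! i, c ! (Suc i mod length c)}) {..<length c}"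
    using cycle_edges_nth_inj[OF c] by (auto simp: inj_on_def)
  ultimately show ?thesis
    by (simp add: card_image)
qed

lemma Union_cycle_edges:
  assumes "c \<noteq> []"
  shows "\<Union>(cycle_edges c) = set c"
proof (intro equalityI subsetI)
  fix x
  assume "x \<in> \<Union>(cycle_edges c)"
  then obtain i where "i < length c" "x = c ! i \<or> x = c ! (Suc i mod length c)"
    unfolding cycle_edges_def by blast
  moreover have "Suc i mod length c < length c"
    using assms by (intro mod_less_divisor) simp
  ultimately show "x \<in> set c"
    by (metis nth_mem)
next
  fix x
  assume "x \<in> set c"
  then obtain i where i: "i < length c" "x = c ! i"
    by (auto simp: in_set_conv_nth)
  then have "{c ! i, c ! (Suc i mod length c)} \<in> cycle_edges c"
    unfolding cycle_edges_def by blast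
  with i show "x \<in> \<Union>(cycle_edges c)"
    by blast
qed

lemma cycle_edges_rotate:
  assumes "distinct c" "3 \<le> length c"
  shows "cycle_edges (rotate n c) = cycle_edges c"
proof -
  let ?m = "length c"
  have "cycle_edges (rotate n c) \<subseteq> cycle_edges c"
  proof
    fix x
    assume "x \<in> cycle_edges (rotate n c)"
    then obtain t where t: "t < ?m" "x = {rotate n c ! t, rotate n c ! (Suc t mod ?m)}"
      unfolding cycle_edges_def by auto
    have "Suc t mod ?m < ?m"
      using assms(2) by (intro mod_less_divisor) linarith
    then have "rotate n c ! (Suc t mod ?m) = c ! (Suc ((t + n) mod ?m) mod ?m)"
      by (simp add: nth_rotate add.commute mod_Suc_eq mod_add_right_eq)
    then have "x = {c ! ((t + n) mod ?m), c ! (Suc ((t + n) mod ?m) mod ?m)}"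
      using t by (simp add: nth_rotate add.commute)
    moreover have "(t + n) mod ?m < ?m"
      using assms(2) by (intro mod_less_divisor) linarith
    ultimately show "x \<in> cycle_edges c"
      unfolding cycle_edges_def by blast
  qed
  moreover have "finite (cycle_edges c)"
    by (simp add: cycle_edges_def)
  ultimately show ?thesis
    using card_cycle_edges[of c] card_cycle_edges[of "rotate n c"] assms
    by (simp add: card_subset_eq)
qed

lemma cycle_list_rotate_to_edge:
  assumes c: "cycle_list V E c" and e: "e \<in> cycle_edges c"
  obtains c' where "cycle_list V E c'" "length c' = length c" "cycle_edges c' = cycle_edges c"
    "e = {last c', hd c'}"
proof -
  let ?m = "length c"
  obtain i where i: "i < ?m" "e = {c ! i, c ! (Suc i mod ?m)}"
    using e unfolding cycle_edges_def by auto
  let ?c = "rotate (Suc i) c"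
  have m: "3 \<le> ?m" "distinct c"
    using c by (auto simp: cycle_list_def)
  have ne: "c \<noteq> []"
    using m(1) by (cases c) auto
  then have "hd ?c = c ! (Suc i mod ?m)"
    by (simp add: hd_rotate_conv_nth del: rotate_Suc)
  moreover have "last ?c = c ! i"
  proof -
    have "last ?c = ?c ! (?m - 1)"
      using ne by (simp add: last_conv_nth del: rotate_Suc)
    also have "\<dots> = c ! ((Suc i + (?m - 1)) mod ?m)"
      using m by (intro nth_rotate) simp
    also have "Suc i + (?m - 1) = i + ?m"
      using m by simp
    finally show ?thesis
      using i(1) by simp
  qed
  moreover have "cycle_edges ?c = cycle_edges c"
    using cycle_edges_rotate m by blast
  ultimately show ?thesis
    using that[of ?c] c i by (simp add: cycle_list_def insert_commute)
qed

lemma path_edge_in_cycle_edges: "Suc l < length c \<Longrightarrow> {c ! l, c ! Suc l} \<in> cycle_edges c"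
  unfolding cycle_edges_def by (intro CollectI exI[of _ l]) simp

lemma path_edge_inj:
  "distinct c \<Longrightarrow> Suc l < length c \<Longrightarrow> Suc j < length c \<Longrightarrow>
    {c ! l, c ! Suc l} = {c ! j, c ! Suc j} \<Longrightarrow> l = j"
  by (auto simp: doubleton_eq_iff nth_eq_iff_index_eq)

lemma path_edge_ne_closing_edge:
  assumes "distinct c" "3 \<le> length c" "Suc l < length c"
  shows "{c ! l, c ! Suc l} \<noteq> {last c, hd c}"
proof -
  have "c \<noteq> []"
    using assms(2) by (cases c) auto
  then have "last c = c ! (length c - 1)" "hd c = c ! 0"
    by (simp_all add: last_conv_nth hd_conv_nth)
  moreover have "l < length c" "0 < length c"
    using assms(3) by linarith+
  ultimately show ?thesis
    using assms
    by (auto simp: doubleton_eq_iff nth_eq_iff_index_eq)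
qed

lemma cycle_path_edge:
  assumes "cycle_list V E c" "Suc l < length c"
  shows "{c ! l, c ! Suc l} \<in> E - {{last c, hd c}}"
  using assms path_edge_in_cycle_edges path_edge_ne_closing_edge by (auto simp: cycle_list_def)

lemma walk_cycle_list: "cycle_list V E c \<Longrightarrow> walk V (E - {{last c, hd c}}) c"
  using cycle_path_edge[of V E c] unfolding walk_def cycle_list_def by auto

lemma reach_along_cycle_to_closing_edge:
  assumes c: "cycle_list V E c" and ej: "ej \<in> cycle_edges c" "ej \<noteq> {last c, hd c}"
    and s: "s \<in> set c"
  shows "\<exists>y\<in>{last c, hd c}. reach V (E - {{last c, hd c}, ej}) s y"
proof -
  let ?m = "length c" and ?F = "E - {{last c, hd c}, ej}"
  have m: "distinct c" "3 \<le> ?m" "set c \<subseteq> V" "c \<noteq> []"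
    using c by (auto simp: cycle_list_def)
  have hd_last: "hd c = c ! 0" "last c = c ! (?m - 1)"
    using m(4) by (simp_all add: hd_conv_nth last_conv_nth)
  obtain j where j: "j < ?m" "ej = {c ! j, c ! (Suc j mod ?m)}"
    using ej(1) unfolding cycle_edges_def by blast
  have j_lt: "Suc j < ?m"
  proof (rule ccontr)
    assume "\<not> Suc j < ?m"
    with j(1) have "Suc j = ?m" "j = ?m - 1" by simp_all
    with j(2) hd_last ej(2) show False
      by (simp add: insert_commute)
  qed
  with j(2) have ej': "ej = {c ! j, c ! Suc j}"
    by simp
  have edge_F: "{c ! l, c ! Suc l} \<in> ?F" if l: "Suc l < ?m" "l \<noteq> j" for l
    using cycle_path_edge[OF c l(1)] path_edge_inj[OF m(1) l(1) j_lt] l(2) ej' by auto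
  have first_arc: "walk V ?F (take (Suc j) c)"
    unfolding walk_def using m(3,4) edge_F j_lt by (auto dest: in_set_takeD)
  have second_arc: "walk V ?F (drop (Suc j) c)"
    unfolding walk_def using m(3) edge_F j_lt by (auto dest: in_set_dropD)
  have "s \<in> set (take (Suc j) c) \<or> s \<in> set (drop (Suc j) c)"
    using s by (metis Un_iff append_take_drop_id set_append)
  then show ?thesis
  proof
    assume "s \<in> set (take (Suc j) c)"
    then have "reach V ?F (hd c) s"
      using reach_along_walk(1)[OF first_arc] by (simp add: hd_take)
    then show ?thesis
      by (blast intro: reach_sym)
  next
    assume "s \<in> set (drop (Suc j) c)"
    then have "reach V ?F s (last c)"
      using reach_along_walk(2)[OF second_arc] j_lt by simp
    then show ?thesis
      by blast
  qed
qed

section \<open>Distances in connected graphs\<close>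

locale conn_graph =
  fixes V :: "'a set" and E :: "'a set set"
  assumes connected: "connected_graph V E"
begin

lemma finite_V: "finite V"
  using connected by (simp add: connected_graph_def simple_graph_def)

lemma edge_subset: "e \<in> E \<Longrightarrow> e \<subseteq> V"
  using connected by (simp add: connected_graph_def simple_graph_def)

lemma card_edge: "e \<in> E \<Longrightarrow> card e = 2"
  using connected by (simp add: connected_graph_def simple_graph_def)

lemma finite_E: "finite E"
  using finite_V edge_subset by (meson Pow_iff finite_Pow_iff finite_subset subsetI)

lemma finite_edge: "e \<in> E \<Longrightarrow> finite e"
  using card_edge by (metis card.infinite zero_neq_numeral)

lemma edge_nonempty: "e \<in> E \<Longrightarrow> e \<noteq> {}"
  using card_edge by fastforce

lemma reach_all: "u \<in> V \<Longrightarrow> v \<in> V \<Longrightarrow> reach V E u v"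
  using connected by (simp add: connected_graph_def)

lemma gdist_self: "u \<in> V \<Longrightarrow> gdist V E u u = 0"
  using gdist_less_length[of V E "[u]"] by simp

lemma gdist_edge: "{a, b} \<in> E \<Longrightarrow> gdist V E a b \<le> 1"
  using gdist_less_length[of V E "[a, b]"] edge_subset[of "{a, b}"] by auto

lemma gdist_sym: "u \<in> V \<Longrightarrow> v \<in> V \<Longrightarrow> gdist V E u v = gdist V E v u"
proof -
  have le: "gdist V E x y \<le> gdist V E y x" if xy: "x \<in> V" "y \<in> V" for x y
  proof -
    obtain p where p: "walk V E p" "hd p = y" "last p = x" "length p = Suc (gdist V E y x)"
      using shortest_walk_exists[OF reach_all[OF xy(2,1)]] by blast
    then show ?thesis
      using gdist_less_length[OF walk_rev[OF p(1)]] by (simp add: hd_rev last_rev)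
  qed
  show "u \<in> V \<Longrightarrow> v \<in> V \<Longrightarrow> ?thesis"
    using le by (simp add: order.antisym)
qed

lemma gdist_triangle:
  assumes "u \<in> V" "v \<in> V" "w \<in> V"
  shows "gdist V E u w \<le> gdist V E u v + gdist V E v w"
proof -
  obtain p where p: "walk V E p" "hd p = u" "last p = v" "length p = Suc (gdist V E u v)"
    using shortest_walk_exists[OF reach_all[OF assms(1,2)]] by blast
  obtain q where q: "walk V E q" "hd q = v" "last q = w" "length q = Suc (gdist V E v w)"
    using shortest_walk_exists[OF reach_all[OF assms(2,3)]] by blast
  have "walk V E (p @ tl q)"
    using walk_append[OF p(1) q(1)] p q by simp
  moreover have "hd (p @ tl q) = u" "last (p @ tl q) = w"
    using p q by (cases p; cases q; auto)+
  ultimately show ?thesis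
    using gdist_less_length[of V E "p @ tl q"] p q by auto
qed

lemma edist_v_le: "e \<in> E \<Longrightarrow> x \<in> e \<Longrightarrow> edist_v V E e k \<le> gdist V E k x"
  unfolding edist_v_def by (simp add: finite_edge)

lemma edist_v_attained: "e \<in> E \<Longrightarrow> \<exists>x\<in>e. edist_v V E e k = gdist V E k x"
  unfolding edist_v_def using Min_in[of "(\<lambda>x. gdist V E k x) ` e"] finite_edge edge_nonempty
  by fastforce

lemma edist_v_doubleton: "edist_v V E {u, w} k = min (gdist V E k u) (gdist V E k w)"
  by (simp add: edist_v_def)

lemma edist_v_endpoint: "e \<in> E \<Longrightarrow> x \<in> e \<Longrightarrow> edist_v V E e x = 0"
  using edist_v_le[of e x x] gdist_self[of x] edge_subset[of e] by auto

lemma edist_e_le: "ei \<in> E \<Longrightarrow> x \<in> ei \<Longrightarrow> edist_e V E ei ej \<le> edist_v V E ej x"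
  unfolding edist_e_def by (simp add: finite_edge)

lemma edist_e_attained: "ei \<in> E \<Longrightarrow> \<exists>x\<in>ei. edist_e V E ei ej = edist_v V E ej x"
  unfolding edist_e_def using Min_in[of "(\<lambda>x. edist_v V E ej x) ` ei"] finite_edge edge_nonempty
  by fastforce

lemma edist_e_sym: "ei \<in> E \<Longrightarrow> ej \<in> E \<Longrightarrow> edist_e V E ei ej = edist_e V E ej ei"
proof -
  have le: "edist_e V E f g \<le> edist_e V E g f" if fg: "f \<in> E" "g \<in> E" for f g
  proof -
    obtain y where y: "y \<in> g" "edist_e V E g f = edist_v V E f y"
      using edist_e_attained[OF fg(2)] by blast
    obtain x where x: "x \<in> f" "edist_v V E f y = gdist V E y x"
      using edist_v_attained[OF fg(1)] by blast
    have "edist_e V E f g \<le> edist_v V E g x"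
      using edist_e_le[OF fg(1) x(1)] .
    also have "\<dots> \<le> gdist V E x y"
      using edist_v_le[OF fg(2) y(1)] .
    also have "\<dots> = edist_e V E g f"
      using gdist_sym[of x y] edge_subset fg x y by auto
    finally show ?thesis .
  qed
  show "ei \<in> E \<Longrightarrow> ej \<in> E \<Longrightarrow> ?thesis"
    using le by (simp add: order.antisym)
qed

lemma shortest_walk_to_edge:
  assumes e: "e \<in> E" and k: "k \<in> V"
  obtains p where "walk V (E - {e}) p" "hd p = k" "last p \<in> e" "length p = Suc (edist_v V E e k)"
proof -
  obtain z where z: "z \<in> e" "edist_v V E e k = gdist V E k z"
    using edist_v_attained[OF e] by blast
  obtain p where p: "walk V E p" "hd p = k" "last p = z" "length p = Suc (gdist V E k z)"
    using shortest_walk_exists[OF reach_all[OF k]] z(1) edge_subset[OF e] by blast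
  have "{p ! i, p ! Suc i} \<noteq> e" if i: "Suc i < length p" for i
  proof
    assume "{p ! i, p ! Suc i} = e"
    then have "edist_v V E e k \<le> gdist V E k (p ! i)"
      using edist_v_le[OF e] by blast
    also have "\<dots> \<le> i"
      using gdist_hd_nth[OF p(1)] p(2) i by simp
    finally show False
      using z(2) p(4) i by simp
  qed
  with p z show ?thesis
    by (intro that[of p]) (simp_all add: walk_Diff_iff)
qed

lemma shortest_path_exists:
  assumes "ei \<in> E" "ej \<in> E"
  obtains p where "shortest_path_between V E ei ej p"
proof -
  obtain x where x: "x \<in> ei" "edist_e V E ei ej = edist_v V E ej x"
    using edist_e_attained[OF assms(1)] by blast
  obtain z where z: "z \<in> ej" "edist_v V E ej x = gdist V E x z"
    using edist_v_attained[OF assms(2)] by blast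
  have "x \<in> V" "z \<in> V"
    using x(1) z(1) edge_subset assms by blast+
  then obtain p where "walk V E p" "hd p = x" "last p = z" "length p = Suc (gdist V E x z)"
    using shortest_walk_exists reach_all by metis
  with x z show ?thesis
    by (intro that[of p]) (simp add: shortest_path_between_def)
qed

lemma edist_sum_on_shortest_path:
  assumes ei: "ei \<in> E" and ej: "ej \<in> E" and p: "shortest_path_between V E ei ej p"
    and x: "x \<in> set p"
  shows "edist_v V E ei x + edist_v V E ej x = edist_e V E ei ej"
proof -
  have w: "walk V E p" "hd p \<in> ei" "last p \<in> ej" "length p = Suc (edist_e V E ei ej)"
    using p unfolding shortest_path_between_def by auto
  obtain i where i: "i < length p" "x = p ! i"
    using x by (auto simp: in_set_conv_nth)
  have xV: "x \<in> V" and hdV: "hd p \<in> V"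
    using w x ei edge_subset by (auto simp: walk_def)
  have "edist_v V E ei x \<le> gdist V E x (hd p)"
    using edist_v_le[OF ei w(2)] .
  also have "\<dots> \<le> i"
    using gdist_hd_nth[OF w(1) i(1)] gdist_sym[OF xV hdV] i(2) by simp
  finally have upper_i: "edist_v V E ei x \<le> i" .
  have upper_j: "edist_v V E ej x < length p - i"
    using edist_v_le[OF ej w(3), of x] gdist_nth_last[OF w(1) i(1)] i(2) by simp
  obtain y where y: "y \<in> ei" "edist_v V E ei x = gdist V E x y"
    using edist_v_attained[OF ei] by blast
  obtain z where z: "z \<in> ej" "edist_v V E ej x = gdist V E x z"
    using edist_v_attained[OF ej] by blast
  have yV: "y \<in> V" and zV: "z \<in> V"
    using y z ei ej edge_subset by blast+
  have "edist_e V E ei ej \<le> edist_v V E ej y"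
    using edist_e_le[OF ei y(1)] .
  also have "\<dots> \<le> gdist V E y z"
    using edist_v_le[OF ej z(1)] .
  also have "\<dots> \<le> gdist V E y x + gdist V E x z"
    using gdist_triangle[OF yV xV zV] .
  also have "\<dots> = edist_v V E ei x + edist_v V E ej x"
    using y z gdist_sym[OF xV yV] by simp
  finally show ?thesis
    using upper_i upper_j w(4) by linarith
qed

section \<open>Spanning trees and edges of an odd cycle\<close>

lemma exists_bfs_parent:
  assumes r: "r \<in> V" and v: "v \<in> V" "v \<noteq> r"
  shows "\<exists>u. {u, v} \<in> E \<and> gdist V E r u + 1 = gdist V E r v"
proof -
  let ?g = "gdist V E r"
  obtain p where p: "walk V E p" "hd p = r" "last p = v" "length p = Suc (?g v)"
    using shortest_walk_exists[OF reach_all[OF r v(1)]] by blast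
  have "?g v \<noteq> 0"
  proof
    assume "?g v = 0"
    with p(4) have "length p = 1" by simp
    with p(2,3) v(2) show False by (cases p) auto
  qed
  then obtain n where n: "?g v = Suc n"
    using not0_implies_Suc by blast
  have "p ! Suc n = v"
    using p n last_conv_nth[of p] by (auto simp: walk_def)
  then have edge: "{p ! n, v} \<in> E"
    using p(1,4) n by (auto simp: walk_def)
  have "?g (p ! n) \<le> n"
    using gdist_hd_nth[OF p(1)] p(2,4) n by simp
  moreover have "?g v \<le> ?g (p ! n) + gdist V E (p ! n) v"
    using gdist_triangle r edge_subset[OF edge] by blast
  moreover have "gdist V E (p ! n) v \<le> 1"
    using gdist_edge[OF edge] .
  ultimately show ?thesis
    using edge n by (intro exI[of _ "p ! n"]) simp
qed

lemma tree_distance_parity: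
  assumes tree: "card E + 1 = card V" and r: "r \<in> V" and ab: "{a, b} \<in> E"
  shows "odd (gdist V E r a + gdist V E r b)"
proof -
  let ?g = "gdist V E r"
  have "\<forall>v\<in>V - {r}. \<exists>u. {u, v} \<in> E \<and> ?g u + 1 = ?g v"
    using exists_bfs_parent[OF r] by blast
  then obtain parent where parent: "\<And>v. v \<in> V - {r} \<Longrightarrow> {parent v, v} \<in> E \<and> ?g (parent v) + 1 = ?g v"
    by (metis bchoice)
  let ?f = "\<lambda>v. {parent v, v}"
  have "inj_on ?f (V - {r})"
  proof (rule inj_onI)
    fix v v'
    assume v: "v \<in> V - {r}" "v' \<in> V - {r}" "?f v = ?f v'"
    show "v = v'"
    proof (rule ccontr)
      assume "v \<noteq> v'"
      with v(3) have "parent v = v'" "parent v' = v"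
        by (auto simp: doubleton_eq_iff)
      with parent[OF v(1)] parent[OF v(2)] show False
        by simp
    qed
  qed
  moreover have "?f ` (V - {r}) \<subseteq> E"
    using parent by blast
  moreover have "card (V - {r}) = card E"
    using tree r finite_V by simp
  ultimately have "?f ` (V - {r}) = E"
    using finite_E by (simp add: card_image card_subset_eq)
  with ab obtain v where v: "v \<in> V - {r}" "{a, b} = {parent v, v}"
    by blast
  have "?g (parent v) + 1 = ?g v"
    using parent[OF v(1)] by blast
  then have "odd (?g (parent v) + ?g v)"
    by presburger
  with v(2) show ?thesis
    by (auto simp: doubleton_eq_iff add.commute)
qed

lemma connected_remove_cycle_edge:
  assumes c: "cycle_list V E c"
  shows "connected_graph V (E - {{last c, hd c}})"
  unfolding connected_graph_def
proof (intro conjI ballI)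
  let ?T = "E - {{last c, hd c}}"
  show "simple_graph V ?T"
    using connected by (auto simp: connected_graph_def simple_graph_def)
  have closing: "reach V ?T (last c) (hd c)"
    using reach_sym[OF reach_walk_hd_last[OF walk_cycle_list[OF c]]] .
  fix u v
  assume "u \<in> V" "v \<in> V"
  show "reach V ?T u v"
  proof (rule reach_propagate[OF reach_all[OF \<open>u \<in> V\<close> \<open>v \<in> V\<close>], where P = "reach V ?T u"])
    show "reach V ?T u u"
      using \<open>u \<in> V\<close> by (rule reach_refl)
    fix a b
    assume ab: "{a, b} \<in> E" "reach V ?T u a"
    have "reach V ?T a b"
    proof (cases "{a, b} = {last c, hd c}")
      case True
      then show ?thesis
        using closing reach_sym by (metis doubleton_eq_iff)
    next
      case False
      then show ?thesis
        using ab(1) edge_subset[OF ab(1)] by (intro reach_edge) auto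
    qed
    with ab(2) show "reach V ?T u b"
      by (rule reach_trans)
  qed
qed

lemma odd_cycle_edge_parity:
  assumes unicyclic: "card E = card V" and c: "cycle_list V E c" and odd: "odd (length c)"
    and e: "e \<in> cycle_edges c" and ab: "{a, b} \<in> E" "{a, b} \<noteq> e"
  shows "odd (edist_v V E e a + edist_v V E e b)"
proof -
  obtain c' where c': "cycle_list V E c'" "length c' = length c" "e = {last c', hd c'}"
    using cycle_list_rotate_to_edge[OF c e] by blast
  let ?T = "E - {e}"
  have eE: "e \<in> E"
    using c e by (auto simp: cycle_list_def)
  have root: "hd c' \<in> V"
    using c'(1) by (cases c') (auto simp: cycle_list_def)
  interpret T: conn_graph V ?T
    using connected_remove_cycle_edge[OF c'(1)] c'(3) by unfold_locales simp
  have "0 < card E"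
    using finite_E eE card_gt_0_iff by blast
  then have "card ?T + 1 = card V"
    using unicyclic card_Diff_singleton[OF eE] by linarith
  note tree = T.tree_distance_parity[OF this root]
  let ?\<delta> = "gdist V ?T (hd c')"
  have endpoints_even: "even (?\<delta> z)" if "z \<in> e" for z
  proof -
    have "?\<delta> (hd c') = 0"
      using root by (rule T.gdist_self)
    moreover have "odd (length c' + ?\<delta> (hd c') + ?\<delta> (last c'))"
      using walk_length_parity[where f = ?\<delta>, OF walk_cycle_list[OF c'(1)] tree] c'(3) by simp
    ultimately show ?thesis
      using that c'(2,3) odd by auto
  qed
  have same_parity: "even (edist_v V E e k + ?\<delta> k)" if k: "k \<in> V" for k
  proof -
    obtain p where p: "walk V ?T p" "hd p = k" "last p \<in> e" "length p = Suc (edist_v V E e k)"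
      using shortest_walk_to_edge[OF eE k] by blast
    show ?thesis
      using walk_length_parity[where f = ?\<delta>, OF p(1) tree] p endpoints_even[OF p(3)] by simp
  qed
  have "odd (?\<delta> a + ?\<delta> b)"
    using tree ab by simp
  moreover have "a \<in> V" "b \<in> V"
    using edge_subset[OF ab(1)] by auto
  ultimately show ?thesis
    using same_parity[of a] same_parity[of b] by presburger
qed

lemma reach_cycle_avoiding_cycle_edges:
  assumes c: "cycle_list V E c" and k: "k \<in> V"
  shows "\<exists>s\<in>set c. reach V (E - Pow (set c)) k s"
proof -
  have "c \<noteq> []" "set c \<subseteq> V"
    using c by (auto simp: cycle_list_def)
  then have "hd c \<in> set c" "set c \<subseteq> V"
    by simp_all
  moreover from this obtain p where "walk V E p" "hd p = k" "last p = hd c"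
    using reach_all[OF k, of "hd c"] unfolding reach_def by blast
  ultimately show ?thesis
    using reach_first_hit[of V E p "set c"] by simp
qed

lemma reach_cycle_edge_endpoint:
  assumes c: "cycle_list V E c" and ei: "ei \<in> cycle_edges c" and ej: "ej \<in> cycle_edges c"
    and ne: "ei \<noteq> ej" and k: "k \<in> V"
  shows "\<exists>y\<in>ei. reach V (E - {ei, ej}) k y"
proof -
  obtain c' where c': "cycle_list V E c'" "cycle_edges c' = cycle_edges c" "ei = {last c', hd c'}"
    using cycle_list_rotate_to_edge[OF c ei] by blast
  obtain s where s: "s \<in> set c'" "reach V (E - Pow (set c')) k s"
    using reach_cycle_avoiding_cycle_edges[OF c'(1) k] by blast
  have "c' \<noteq> []"
    using c'(1) by (auto simp: cycle_list_def)
  then have "ei \<subseteq> set c'" "ej \<subseteq> set c'"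
    using Union_cycle_edges ei ej c'(2) by blast+
  then have "E - Pow (set c') \<subseteq> E - {ei, ej}"
    by blast
  with s(2) have "reach V (E - {ei, ej}) k s"
    by (rule reach_mono)
  moreover have "ej \<in> cycle_edges c'" "ej \<noteq> {last c', hd c'}"
    using ej ne c'(2,3) by simp_all
  then obtain y where "y \<in> ei" "reach V (E - {ei, ej}) s y"
    using reach_along_cycle_to_closing_edge[OF c'(1) _ _ s(1)] c'(3) by blast
  ultimately show ?thesis
    by (blast intro: reach_trans)
qed

lemma odd_cycle_parity_reach:
  assumes unicyclic: "card E = card V" and c: "cycle_list V E c" and odd: "odd (length c)"
    and ei: "ei \<in> cycle_edges c" and ej: "ej \<in> cycle_edges c"
    and ab: "reach V (E - {ei, ej}) a b"
  shows "(edist_v V E ei a + edist_v V E ej a) mod 2 = (edist_v V E ei b + edist_v V E ej b) mod 2"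
proof (rule reach_propagate[OF ab])
  fix x y
  assume xy: "{x, y} \<in> E - {ei, ej}"
  then have "odd (edist_v V E ei x + edist_v V E ei y)" "odd (edist_v V E ej x + edist_v V E ej y)"
    using odd_cycle_edge_parity[OF unicyclic c odd] ei ej by auto
  moreover assume "(edist_v V E ei a + edist_v V E ej a) mod 2 = (edist_v V E ei x + edist_v V E ej x) mod 2"
  ultimately show "(edist_v V E ei a + edist_v V E ej a) mod 2 = (edist_v V E ei y + edist_v V E ej y) mod 2"
    by presburger
qed simp

lemma odd_cycle_parity_flip:
  assumes unicyclic: "card E = card V" and c: "cycle_list V E c" and odd: "odd (length c)"
    and ei: "ei \<in> cycle_edges c" and ej: "ej \<in> cycle_edges c" and ne: "ei \<noteq> ej"
    and xy: "ei = {x, y}"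
  shows "(edist_v V E ei x + edist_v V E ej x) mod 2 \<noteq> (edist_v V E ei y + edist_v V E ej y) mod 2"
proof -
  have eiE: "ei \<in> E"
    using c ei by (auto simp: cycle_list_def)
  have "odd (edist_v V E ej x + edist_v V E ej y)"
    using odd_cycle_edge_parity[OF unicyclic c odd ej] eiE ne xy by simp
  moreover have "edist_v V E ei x = 0" "edist_v V E ei y = 0"
    using edist_v_endpoint[OF eiE] xy by auto
  ultimately show ?thesis
    by presburger
qed

lemma odd_cycle_parity_iff_comp_with_path:
  assumes unicyclic: "card E = card V" and c: "cycle_list V E c" and odd: "odd (length c)"
    and ei: "ei \<in> cycle_edges c" and ej: "ej \<in> cycle_edges c" and ne: "ei \<noteq> ej" and k: "k \<in> V"
  shows "k \<in> comp_with_path V E ei ej \<longleftrightarrow>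
    (edist_v V E ei k + edist_v V E ej k) mod 2 = edist_e V E ei ej mod 2"
proof -
  define par where "par x = (edist_v V E ei x + edist_v V E ej x) mod 2" for x
  note par_reach = odd_cycle_parity_reach[OF unicyclic c odd ei ej, folded par_def]
  have eiE: "ei \<in> E" and ejE: "ej \<in> E"
    using c ei ej by (auto simp: cycle_list_def)
  have par_path: "par x = edist_e V E ei ej mod 2" if "shortest_path_between V E ei ej p" "x \<in> set p"
    for p x
    using edist_sum_on_shortest_path[OF eiE ejE that] unfolding par_def by simp
  show ?thesis
    unfolding par_def[symmetric]
  proof
    assume "k \<in> comp_with_path V E ei ej"
    then obtain p x where "shortest_path_between V E ei ej p" "x \<in> set p" "reach V (E - {ei, ej}) x k"
      unfolding comp_with_path_def by blast
    then show "par k = edist_e V E ei ej mod 2"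
      using par_path par_reach by metis
  next
    assume par_k: "par k = edist_e V E ei ej mod 2"
    obtain p where p: "shortest_path_between V E ei ej p"
      using shortest_path_exists[OF eiE ejE] by blast
    then have x: "hd p \<in> ei" "hd p \<in> set p"
      unfolding shortest_path_between_def by (auto simp: walk_def)
    obtain y where y: "y \<in> ei" "reach V (E - {ei, ej}) k y"
      using reach_cycle_edge_endpoint[OF c ei ej ne k] by blast
    show "k \<in> comp_with_path V E ei ej"
    proof (cases "y = hd p")
      case True
      with y(2) p x(2) k show ?thesis
        unfolding comp_with_path_def by (blast intro: reach_sym)
    next
      case False
      with x(1) y(1) have "ei = {hd p, y}"
        using card_edge[OF eiE] by (auto simp: card_2_iff)
      then have "par (hd p) \<noteq> par y"
        using odd_cycle_parity_flip[OF unicyclic c odd ei ej ne, folded par_def] by blast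
      with par_k par_path[OF p x(2)] par_reach[OF y(2)] show ?thesis
        by simp
    qed
  qed
qed

section \<open>Bridges\<close>

lemma comp_with_cycle_closed:
  assumes "a \<in> comp_with_cycle V E C e" and "{a, b} \<in> E" and "{a, b} \<noteq> e"
  shows "b \<in> comp_with_cycle V E C e"
proof -
  obtain c where c: "c \<in> \<Union>C" "reach V (E - {e}) c a"
    using assms(1) unfolding comp_with_cycle_def by blast
  have "a \<in> V" "b \<in> V"
    using edge_subset[OF assms(2)] by auto
  with assms(2,3) have "reach V (E - {e}) a b"
    by (intro reach_edge) auto
  with c \<open>b \<in> V\<close> show ?thesis
    unfolding comp_with_cycle_def by (blast intro: reach_trans)
qed

lemma edge_in_comp_with_cycle:
  assumes "f \<in> E" "f \<noteq> e" "f \<inter> comp_with_cycle V E C e \<noteq> {}"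
  shows "f \<subseteq> comp_with_cycle V E C e"
proof -
  obtain a b where f: "f = {a, b}"
    using card_edge[OF assms(1)] by (meson card_2_iff)
  then have "{b, a} \<in> E" "{b, a} \<noteq> e"
    using assms(1,2) by (simp_all add: insert_commute)
  moreover from assms(3) f consider "a \<in> comp_with_cycle V E C e" | "b \<in> comp_with_cycle V E C e"
    by blast
  ultimately show ?thesis
    using comp_with_cycle_closed[of a C e b] comp_with_cycle_closed[of b C e a] assms(1,2) f
    by cases blast+
qed

lemma edge_leaving_comp_with_cycle:
  "{a, b} \<in> E \<Longrightarrow> a \<in> comp_with_cycle V E C e \<Longrightarrow> b \<notin> comp_with_cycle V E C e \<Longrightarrow> {a, b} = e"
  using comp_with_cycle_closed[of a C e b] by blast

(* C need not be a cycle here: parts (c) and (d) hold for any nonempty set of edges C. *)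
context
  fixes C :: "'a set set"
  assumes cycle_in_V: "\<Union>C \<subseteq> V" and cycle_nonempty: "\<Union>C \<noteq> {}"
begin

lemma cycle_in_comp_with_cycle: "\<Union>C \<subseteq> comp_with_cycle V E C e"
proof
  fix x
  assume x: "x \<in> \<Union>C"
  then have "x \<in> V"
    using cycle_in_V by blast
  with x show "x \<in> comp_with_cycle V E C e"
    unfolding comp_with_cycle_def by (blast intro: reach_refl)
qed

lemma bridge_endpoints:
  assumes e: "e \<in> E" and k: "k \<in> V" "k \<notin> comp_with_cycle V E C e"
  obtains u w where "e = {u, w}" "u \<in> comp_with_cycle V E C e" "w \<notin> comp_with_cycle V E C e"
proof -
  obtain c where c: "c \<in> \<Union>C"
    using cycle_nonempty by blast
  then obtain p where p: "walk V E p" "hd p = c" "last p = k"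
    using reach_all[OF _ k(1)] cycle_in_V unfolding reach_def by blast
  have "p \<noteq> []" "hd p \<in> comp_with_cycle V E C e"
    using p c cycle_in_comp_with_cycle by (auto simp: walk_def)
  then obtain i where i: "Suc i < length p" "p ! i \<in> comp_with_cycle V E C e"
    "p ! Suc i \<notin> comp_with_cycle V E C e"
    using exists_leaving_index[of p] k(2) p(3) by blast
  moreover have "{p ! i, p ! Suc i} \<in> E"
    using p(1) i(1) by (simp add: walk_def)
  ultimately show ?thesis
    using edge_leaving_comp_with_cycle that by blast
qed

lemma gdist_across_bridge:
  assumes e: "e \<in> E" "e = {u, w}" "u \<in> comp_with_cycle V E C e" "w \<notin> comp_with_cycle V E C e"
    and k: "k \<in> V" "k \<notin> comp_with_cycle V E C e" and v: "v \<in> comp_with_cycle V E C e"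
  shows "gdist V E k v = gdist V E k w + 1 + gdist V E u v"
proof -
  let ?A = "comp_with_cycle V E C e"
  have V: "u \<in> V" "w \<in> V" "v \<in> V"
    using edge_subset e v by (auto simp: comp_with_cycle_def)
  obtain p where p: "walk V E p" "hd p = k" "last p = v" "length p = Suc (gdist V E k v)"
    using shortest_walk_exists[OF reach_all[OF k(1) V(3)]] by blast
  moreover have "p \<noteq> []"
    using p(1) by (simp add: walk_def)
  ultimately obtain i where i: "Suc i < length p" "p ! i \<notin> ?A" "p ! Suc i \<in> ?A"
    using exists_leaving_index[of p "- ?A"] v k(2) by auto
  moreover have "{p ! Suc i, p ! i} \<in> E"
    using p(1) i(1) by (simp add: walk_def insert_commute)
  ultimately have "{p ! Suc i, p ! i} = {u, w}"
    using edge_leaving_comp_with_cycle e(2) by blast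
  with i e(3,4) have "p ! i = w" "p ! Suc i = u"
    by (auto simp: doubleton_eq_iff)
  then have "gdist V E k w \<le> i" "gdist V E u v < length p - Suc i"
    using gdist_hd_nth[OF p(1), of i] gdist_nth_last[OF p(1), of "Suc i"] i(1) p(2,3)
    by simp_all
  moreover have "gdist V E k v \<le> gdist V E k w + gdist V E w v"
    using gdist_triangle V k(1) by blast
  moreover have "gdist V E w v \<le> gdist V E w u + gdist V E u v"
    using gdist_triangle V by blast
  moreover have "gdist V E w u \<le> 1"
    using gdist_edge e(1,2) by (simp add: insert_commute)
  ultimately show ?thesis
    using p(4) i(1) by linarith
qed

lemma parity_beyond_bridge:
  assumes ei: "ei \<in> E" and ej: "ej \<in> E" and k: "k \<in> V" "k \<notin> comp_with_cycle V E C ej"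
    and near: "ei \<subseteq> comp_with_cycle V E C ej"
  shows "(edist_v V E ei k + edist_v V E ej k) mod 2 \<noteq> edist_e V E ei ej mod 2"
proof -
  let ?A = "comp_with_cycle V E C ej"
  obtain u w where uw: "ej = {u, w}" "u \<in> ?A" "w \<notin> ?A"
    using bridge_endpoints[OF ej k] by blast
  have V: "u \<in> V" "w \<in> V" and eiV: "ei \<subseteq> V"
    using edge_subset ei ej uw(1) by auto
  have far: "gdist V E k v = gdist V E k w + 1 + gdist V E u v" if "v \<in> ?A" for v
    using gdist_across_bridge[OF ej uw k that] .
  have w_dist: "gdist V E w v = gdist V E u v + 1" if "v \<in> ?A" for v
    using gdist_across_bridge[OF ej uw V(2) uw(3) that] gdist_self[OF V(2)] by simp
  have "edist_v V E ej k = gdist V E k w"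
    using far[OF uw(2)] gdist_self[OF V(1)] by (simp add: uw(1) edist_v_doubleton)
  moreover have "edist_v V E ei k = edist_v V E ei u + (gdist V E k w + 1)"
  proof -
    have "(\<lambda>x. gdist V E k x) ` ei = (\<lambda>x. gdist V E u x + (gdist V E k w + 1)) ` ei"
      using far near by (intro image_cong) auto
    then show ?thesis
      unfolding edist_v_def
      using Min_add_commute[OF finite_edge[OF ei] edge_nonempty[OF ei], of "gdist V E u"]
      by (simp only:)
  qed
  moreover have "edist_e V E ei ej = edist_v V E ei u"
  proof -
    have "edist_v V E ej x = gdist V E u x" if "x \<in> ei" for x
    proof -
      have "x \<in> V" "x \<in> ?A"
        using that near eiV by auto
      then show ?thesis
        using w_dist[of x] gdist_sym[of x u] gdist_sym[of x w] V by (simp add: uw(1) edist_v_doubleton)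
    qed
    then show ?thesis
      unfolding edist_e_def edist_v_def by (simp cong: image_cong)
  qed
  ultimately show ?thesis
    by presburger
qed

lemma comp_with_cycle_nested:
  assumes ei: "ei \<in> E" and ej: "ej \<in> E" and ne: "ei \<noteq> ej"
    and far: "\<not> ei \<subseteq> comp_with_cycle V E C ej"
  shows "comp_with_cycle V E C ej \<subseteq> comp_with_cycle V E C ei"
proof
  let ?Ai = "comp_with_cycle V E C ei" and ?Aj = "comp_with_cycle V E C ej"
  have disjoint: "ei \<inter> ?Aj = {}"
    using edge_in_comp_with_cycle[OF ei ne] far by blast
  fix x
  assume "x \<in> ?Aj"
  then obtain c where c: "c \<in> \<Union>C" "reach V (E - {ej}) c x"
    unfolding comp_with_cycle_def by blast
  have "x \<in> ?Aj \<inter> ?Ai"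
  proof (rule reach_propagate[OF c(2), where P = "\<lambda>y. y \<in> ?Aj \<inter> ?Ai"])
    show "c \<in> ?Aj \<inter> ?Ai"
      using c(1) cycle_in_comp_with_cycle by blast
    fix a b
    assume "{a, b} \<in> E - {ej}" "a \<in> ?Aj \<inter> ?Ai"
    moreover from this have "{a, b} \<noteq> ei"
      using disjoint by blast
    ultimately show "b \<in> ?Aj \<inter> ?Ai"
      using comp_with_cycle_closed[of a C ej b] comp_with_cycle_closed[of a C ei b] by blast
  qed
  then show "x \<in> ?Ai" by blast
qed

lemma parity_beyond_two_bridges:
  assumes ei: "ei \<in> E" and ej: "ej \<in> E" and ne: "ei \<noteq> ej"
    and k: "k \<in> V" "k \<notin> comp_with_cycle V E C ei" "k \<notin> comp_with_cycle V E C ej"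
  shows "(edist_v V E ei k + edist_v V E ej k) mod 2 \<noteq> edist_e V E ei ej mod 2"
proof (cases "ei \<subseteq> comp_with_cycle V E C ej")
  case True
  then show ?thesis
    using parity_beyond_bridge[OF ei ej k(1,3)] by blast
next
  case False
  obtain u w where uw: "ej = {u, w}" "u \<in> comp_with_cycle V E C ej"
    using bridge_endpoints[OF ej k(1,3)] by blast
  then have "u \<in> comp_with_cycle V E C ei"
    using comp_with_cycle_nested[OF ei ej ne False] by blast
  then have "ej \<subseteq> comp_with_cycle V E C ei"
    using edge_in_comp_with_cycle[OF ej ne[symmetric]] uw(1) by blast
  then have "(edist_v V E ej k + edist_v V E ei k) mod 2 \<noteq> edist_e V E ej ei mod 2"
    using parity_beyond_bridge[OF ej ei k(1,2)] by blast
  then show ?thesis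
    using edist_e_sym[OF ei ej] by (simp add: add.commute)
qed

end

end

theorem mainTheorem12:
  fixes V :: "'a set" and E C :: "'a set set" and ei ej :: "'a set" and k :: 'a
  assumes "unicyclic V E"
    and "is_cycle V E C"
    and "odd (card C)"
    and "ei \<in> E" and "ej \<in> E" and "ei \<noteq> ej"
    and "k \<in> V"
  shows
    "(ei \<in> C \<and> ej \<in> C \<and> k \<in> comp_with_path V E ei ej \<longrightarrow>
        (edist_v V E ei k + edist_v V E ej k) mod 2 = edist_e V E ei ej mod 2)
   \<and> (ei \<in> C \<and> ej \<in> C \<and> k \<notin> comp_with_path V E ei ej \<longrightarrow>
        (edist_v V E ei k + edist_v V E ej k) mod 2 \<noteq> edist_e V E ei ej mod 2)
   \<and> (ei \<notin> C \<and> ej \<notin> C \<and> k \<in> comp_without_cycle V E C ei \<inter> comp_without_cycle V E C ej \<longrightarrow>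
        (edist_v V E ei k + edist_v V E ej k) mod 2 \<noteq> edist_e V E ei ej mod 2)
   \<and> (ei \<in> C \<and> ej \<notin> C \<and> k \<notin> comp_with_cycle V E C ej \<longrightarrow>
        (edist_v V E ei k + edist_v V E ej k) mod 2 \<noteq> edist_e V E ei ej mod 2)"
proof -
  interpret conn_graph V E
    using assms(1) by unfold_locales (simp add: unicyclic_def)
  have unicyclic: "card E = card V"
    using assms(1) by (simp add: unicyclic_def)
  obtain c where c: "cycle_list V E c" "C = cycle_edges c"
    using assms(2) is_cycle_iff by blast
  have odd: "odd (length c)" and ne: "c \<noteq> []"
    using assms(3) c card_cycle_edges[of c] by (auto simp: cycle_list_def)
  have C_V: "\<Union>C \<subseteq> V" "\<Union>C \<noteq> {}"
    using Union_cycle_edges[OF ne] c ne by (auto simp: cycle_list_def)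
  note parts_ab = odd_cycle_parity_iff_comp_with_path[OF unicyclic c(1) odd _ _ assms(6,7)]
  note part_c = parity_beyond_two_bridges[OF C_V assms(4-7)]
  have part_d: "(edist_v V E ei k + edist_v V E ej k) mod 2 \<noteq> edist_e V E ei ej mod 2"
    if "ei \<in> C" "k \<notin> comp_with_cycle V E C ej"
    using parity_beyond_bridge[OF C_V assms(4,5,7) that(2)] cycle_in_comp_with_cycle[OF C_V] that(1)
    by blast
  show ?thesis
    using parts_ab part_c part_d c(2) by (auto simp: comp_without_cycle_def)
qed

end
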